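(* Let $C,D,E$ be convex subcomplexes of a CAT(0) cube complex $\mathcal X$. Then $\mathfrak g_{\mathfrak g_C(D)}(E)$, $\mathfrak g_C(\mathfrak g_D(E))$ and $\mathfrak g_C(\mathfrak g_E(D))$ are pairwise parallel.
   Context: For convex $Y$, the gate map $\mathfrak g_Y:\mathcal X\to Y$ sends each $0$-cube to the unique closest $0$-cube of $Y$ (combinatorial metric on the $1$-skeleton) and extends cubically. Two convex subcomplexes are parallel if exactly the same hyperplanes intersect them. *)

theory Defs
  imports Main
begin

text \<open>A CAT(0) cube complex is represented by its 1-skeleton, which is a median graph
  (Chepoi/Roller); the complex is recovered from its 1-skeleton by filling in cubes.\<close>

definition walk :: "('a \<Rightarrow> 'a \<Rightarrow> bool) \<Rightarrow> 'a list \<Rightarrow> bool" where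
  "walk adj xs \<longleftrightarrow> xs \<noteq> [] \<and> (\<forall>i. Suc i < length xs \<longrightarrow> adj (xs ! i) (xs ! Suc i))"

definition gdist :: "('a \<Rightarrow> 'a \<Rightarrow> bool) \<Rightarrow> 'a \<Rightarrow> 'a \<Rightarrow> nat" where
  "gdist adj x y = (LEAST n. \<exists>xs. walk adj xs \<and> hd xs = x \<and> last xs = y \<and> length xs = Suc n)"

definition interval :: "('a \<Rightarrow> 'a \<Rightarrow> bool) \<Rightarrow> 'a \<Rightarrow> 'a \<Rightarrow> 'a set" where
  "interval adj x y = {z. gdist adj x z + gdist adj z y = gdist adj x y}"

definition median_graph :: "('a \<Rightarrow> 'a \<Rightarrow> bool) \<Rightarrow> bool" where
  "median_graph adj \<longleftrightarrow>
     (\<forall>x y. adj x y \<longrightarrow> adj y x) \<and> (\<forall>x. \<not> adj x x) \<and>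
     (\<forall>x y. \<exists>xs. walk adj xs \<and> hd xs = x \<and> last xs = y) \<and>
     (\<forall>x y z. \<exists>!m. m \<in> interval adj x y \<and> m \<in> interval adj y z \<and> m \<in> interval adj x z)"

text \<open>A convex subcomplex is determined by its (nonempty, combinatorially convex) set of 0-cubes.\<close>
definition convex_sub :: "('a \<Rightarrow> 'a \<Rightarrow> bool) \<Rightarrow> 'a set \<Rightarrow> bool" where
  "convex_sub adj Y \<longleftrightarrow> Y \<noteq> {} \<and> (\<forall>x\<in>Y. \<forall>y\<in>Y. interval adj x y \<subseteq> Y)"

definition gate :: "('a \<Rightarrow> 'a \<Rightarrow> bool) \<Rightarrow> 'a set \<Rightarrow> 'a \<Rightarrow> 'a" where
  "gate adj Y x = (THE g. g \<in> Y \<and> (\<forall>y\<in>Y. y \<noteq> g \<longrightarrow> gdist adj x g < gdist adj x y))"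

text \<open>Edges (1-cubes) as 2-element vertex sets; hyperplanes are the classes of the
  equivalence relation on edges generated by being opposite edges of a square (2-cube).\<close>
definition is_edge :: "('a \<Rightarrow> 'a \<Rightarrow> bool) \<Rightarrow> 'a set \<Rightarrow> bool" where
  "is_edge adj e \<longleftrightarrow> (\<exists>u v. e = {u, v} \<and> adj u v)"

definition sq_opp :: "('a \<Rightarrow> 'a \<Rightarrow> bool) \<Rightarrow> 'a set \<Rightarrow> 'a set \<Rightarrow> bool" where
  "sq_opp adj e f \<longleftrightarrow> (\<exists>u v x y. e = {u, v} \<and> f = {x, y} \<and>
      adj u v \<and> adj v y \<and> adj y x \<and> adj x u \<and> u \<noteq> y \<and> v \<noteq> x)"

definition hyperplanes :: "('a \<Rightarrow> 'a \<Rightarrow> bool) \<Rightarrow> 'a set set set" where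
  "hyperplanes adj = {{f. (sq_opp adj)\<^sup>*\<^sup>* e f} | e. is_edge adj e}"

text \<open>A hyperplane meets a subcomplex iff it is dual to an edge of that subcomplex.\<close>
definition crosses :: "'a set set \<Rightarrow> 'a set \<Rightarrow> bool" where
  "crosses H Y \<longleftrightarrow> (\<exists>f\<in>H. f \<subseteq> Y)"

definition parallel :: "('a \<Rightarrow> 'a \<Rightarrow> bool) \<Rightarrow> 'a set \<Rightarrow> 'a set \<Rightarrow> bool" where
  "parallel adj Y Z \<longleftrightarrow> (\<forall>H\<in>hyperplanes adj. crosses H Y \<longleftrightarrow> crosses H Z)"

end

theory Submission imports Defs begin

text \<open>Every edge uv of the median graph determines the halfspace
  W(u,v) = {x. d(x,u) < d(x,v)}, whose complement is W(v,u). By the Djokovic-Winkler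
  argument, two edges are linked by a chain of squares exactly when they cut the same
  halfspace, so the hyperplane dual to uv crosses a convex set Y iff Y meets both W(u,v)
  and W(v,u). Halfspaces are convex, so the gate x \<mapsto> g_A(x) lies on the same side of
  W(u,v) as x whenever A meets both sides. From this, g_A(B) is convex, and a hyperplane
  crosses g_A(B) iff it crosses both A and B. Hence each of the three sets in question is
  crossed by exactly the hyperplanes crossing all of C, D and E.\<close>

definition walk_of_length :: "('a \<Rightarrow> 'a \<Rightarrow> bool) \<Rightarrow> nat \<Rightarrow> 'a \<Rightarrow> 'a \<Rightarrow> bool" where
  "walk_of_length adj n x y \<longleftrightarrow> (\<exists>xs. walk adj xs \<and> hd xs = x \<and> last xs = y \<and> length xs = Suc n)"

lemma walk_Cons: "ys \<noteq> [] \<Longrightarrow> walk adj (x # ys) \<longleftrightarrow> adj x (hd ys) \<and> walk adj ys"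
  unfolding walk_def by (auto simp: nth_Cons hd_conv_nth split: nat.splits)

lemma walk_of_length_0: "walk_of_length adj 0 x y \<longleftrightarrow> x = y"
proof
  assume "walk_of_length adj 0 x y"
  then obtain xs where "hd xs = x" "last xs = y" "length xs = Suc 0"
    unfolding walk_of_length_def by blast
  then show "x = y" by (cases xs) auto
next
  assume "x = y"
  then show "walk_of_length adj 0 x y"
    unfolding walk_of_length_def by (intro exI[of _ "[x]"]) (auto simp: walk_def)
qed

lemma walk_of_length_Suc:
  "walk_of_length adj (Suc n) x y \<longleftrightarrow> (\<exists>w. adj x w \<and> walk_of_length adj n w y)"
proof
  assume "walk_of_length adj (Suc n) x y"
  then obtain xs where xs: "walk adj xs" "hd xs = x" "last xs = y" "length xs = Suc (Suc n)"
    unfolding walk_of_length_def by blast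
  then obtain ys where ys: "xs = x # ys" "ys \<noteq> []"
    by (metis Suc_length_conv length_0_conv list.sel(1) nat.distinct(1))
  with xs have "adj x (hd ys)" "walk adj ys" "last ys = y" "length ys = Suc n"
    by (auto simp: walk_Cons)
  then show "\<exists>w. adj x w \<and> walk_of_length adj n w y"
    unfolding walk_of_length_def by blast
next
  assume "\<exists>w. adj x w \<and> walk_of_length adj n w y"
  then obtain ys where "adj x (hd ys)" "walk adj ys" "last ys = y" "length ys = Suc n"
    unfolding walk_of_length_def by blast
  moreover from this have "ys \<noteq> []" by auto
  ultimately show "walk_of_length adj (Suc n) x y"
    unfolding walk_of_length_def by (intro exI[of _ "x # ys"]) (auto simp: walk_Cons)
qed

lemma walk_of_length_add:
  "walk_of_length adj m x y \<Longrightarrow> walk_of_length adj n y z \<Longrightarrow> walk_of_length adj (m + n) x z"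
  by (induction m arbitrary: x) (auto simp: walk_of_length_0 walk_of_length_Suc)

definition halfspace :: "('a \<Rightarrow> 'a \<Rightarrow> bool) \<Rightarrow> 'a \<Rightarrow> 'a \<Rightarrow> 'a set" where
  "halfspace adj u v = {x. gdist adj x u < gdist adj x v}"

definition cuts :: "('a \<Rightarrow> 'a \<Rightarrow> bool) \<Rightarrow> 'a \<Rightarrow> 'a \<Rightarrow> 'a set \<Rightarrow> bool" where
  "cuts adj u v Y \<longleftrightarrow> (\<exists>y\<in>Y. y \<in> halfspace adj u v) \<and> (\<exists>y\<in>Y. y \<notin> halfspace adj u v)"

locale median =
  fixes adj :: "'a \<Rightarrow> 'a \<Rightarrow> bool"
  assumes median_graph: "median_graph adj"
begin

abbreviation "d \<equiv> gdist adj"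
abbreviation "I \<equiv> interval adj"
abbreviation "W \<equiv> halfspace adj"

subsection \<open>The graph metric\<close>

lemma adj_sym: "adj x y \<Longrightarrow> adj y x"
  using median_graph unfolding median_graph_def by blast

lemma adj_irrefl: "\<not> adj x x"
  using median_graph unfolding median_graph_def by blast

lemma median_exists: "\<exists>m. m \<in> I x y \<and> m \<in> I y z \<and> m \<in> I x z"
  using median_graph unfolding median_graph_def by blast

lemma median_unique:
  "m \<in> I x y \<Longrightarrow> m \<in> I y z \<Longrightarrow> m \<in> I x z \<Longrightarrow>
   m' \<in> I x y \<Longrightarrow> m' \<in> I y z \<Longrightarrow> m' \<in> I x z \<Longrightarrow> m = m'"
  using median_graph unfolding median_graph_def by blast

lemma walk_of_length_exists: "\<exists>n. walk_of_length adj n x y"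
proof -
  obtain xs where "walk adj xs" "hd xs = x" "last xs = y"
    using median_graph unfolding median_graph_def by blast
  moreover from this have "length xs = Suc (length xs - 1)"
    by (cases xs) (auto simp: walk_def)
  ultimately show ?thesis unfolding walk_of_length_def by blast
qed

lemma gdist_eq_Least: "d x y = (LEAST n. walk_of_length adj n x y)"
  by (simp add: gdist_def walk_of_length_def)

lemma walk_of_length_gdist: "walk_of_length adj (d x y) x y"
  unfolding gdist_eq_Least using walk_of_length_exists by (rule LeastI_ex)

lemma gdist_le: "walk_of_length adj n x y \<Longrightarrow> d x y \<le> n"
  unfolding gdist_eq_Least by (rule Least_le)

lemma gdist_triangle: "d x z \<le> d x y + d y z"
  by (rule gdist_le[OF walk_of_length_add[OF walk_of_length_gdist walk_of_length_gdist]])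

lemma walk_of_length_sym: "walk_of_length adj n x y \<Longrightarrow> walk_of_length adj n y x"
proof (induction n arbitrary: x)
  case 0
  then show ?case by (simp add: walk_of_length_0)
next
  case (Suc n)
  then obtain w where "adj x w" "walk_of_length adj n w y"
    by (auto simp: walk_of_length_Suc)
  then have "walk_of_length adj n y w" "walk_of_length adj 1 w x"
    using Suc.IH adj_sym by (auto simp: walk_of_length_Suc walk_of_length_0)
  from walk_of_length_add[OF this] show ?case by simp
qed

lemma gdist_sym: "d x y = d y x"
  using gdist_le[OF walk_of_length_sym[OF walk_of_length_gdist[of x y]]]
    gdist_le[OF walk_of_length_sym[OF walk_of_length_gdist[of y x]]]
  by simp

lemma gdist_eq_0_iff [simp]: "d x y = 0 \<longleftrightarrow> x = y"
  using walk_of_length_gdist[of x y] gdist_le[of 0 x y] by (auto simp: walk_of_length_0)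

lemma gdist_refl [simp]: "d x x = 0"
  by simp

lemma gdist_adj: "adj x y \<Longrightarrow> d x y = 1"
proof -
  assume xy: "adj x y"
  then have "d x y \<le> 1" by (intro gdist_le) (auto simp: walk_of_length_Suc walk_of_length_0)
  moreover have "x \<noteq> y" using xy adj_irrefl by auto
  ultimately show ?thesis by (cases "d x y") auto
qed

lemma adj_if_gdist_eq_1: "d x y = 1 \<Longrightarrow> adj x y"
  using walk_of_length_gdist[of x y] by (auto simp: walk_of_length_Suc walk_of_length_0)

lemma geodesic_step: "x \<noteq> y \<Longrightarrow> \<exists>w. adj x w \<and> d w y + 1 = d x y"
proof -
  assume "x \<noteq> y"
  then obtain n where n: "d x y = Suc n" by (cases "d x y") auto
  then obtain w where w: "adj x w" "walk_of_length adj n w y"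
    using walk_of_length_gdist[of x y] by (auto simp: walk_of_length_Suc)
  have "d x y \<le> d x w + d w y" by (rule gdist_triangle)
  then show ?thesis
    using w gdist_le[OF w(2)] gdist_adj[OF w(1)] n by (intro exI[of _ w]) auto
qed

lemma gdist_adj_neq: "adj u v \<Longrightarrow> d z u \<noteq> d z v"
proof
  assume uv: "adj u v" and eq: "d z u = d z v"
  obtain m where m: "m \<in> I u v" "m \<in> I v z" "m \<in> I u z"
    using median_exists by blast
  have duv: "d u v = 1" "d v u = 1" using uv gdist_adj adj_sym by auto
  with m(1) have "d u m + d m v = 1" by (simp add: interval_def)
  then have "d u m = 0 \<or> d m v = 0" by arith
  then have "m = u \<or> m = v" by auto
  then show False
    using m(2,3) duv eq gdist_sym[of z u] gdist_sym[of z v] by (auto simp: interval_def)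
qed

lemma gdist_adj_cases: "adj u v \<Longrightarrow> d z v = d z u + 1 \<or> d z u = d z v + 1"
  using gdist_triangle[of z v u] gdist_triangle[of z u v] gdist_adj[of u v] gdist_adj[of v u]
    gdist_adj_neq[of u v z] adj_sym gdist_sym[of u v]
  by fastforce

text \<open>The common neighbour is the median of u, v and z.\<close>

lemma square_completion:
  assumes "adj u x" "adj v x" "u \<noteq> v" "d z u = d z v"
  shows "\<exists>w. adj u w \<and> adj v w \<and> d z w + 1 = d z u"
proof -
  have "d u v \<le> d u x + d x v" by (rule gdist_triangle)
  moreover have "d u x = 1" "d x v = 1" using assms gdist_adj adj_sym by auto
  moreover have "d u v \<noteq> 1"
    using gdist_adj_neq[of u v x] adj_if_gdist_eq_1 calculation(2,3) gdist_sym[of x u] by auto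
  ultimately have duv: "d u v = 2" using assms(3) by (cases "d u v") auto
  obtain m where m: "m \<in> I u v" "m \<in> I v z" "m \<in> I u z" using median_exists by blast
  have "d u m + d m v = 2" "d v m + d m z = d v z" "d u m + d m z = d u z"
    using m duv by (auto simp: interval_def)
  moreover have "d m v = d v m" "d u z = d z u" "d v z = d z v" "d m z = d z m"
    by (rule gdist_sym)+
  ultimately have "d u m = 1" "d v m = 1" "d z m + 1 = d z u"
    using assms(4) by arith+
  then show ?thesis using adj_if_gdist_eq_1 by blast
qed

subsection \<open>Halfspaces\<close>

lemma halfspace_compl: "adj u v \<Longrightarrow> z \<notin> W u v \<longleftrightarrow> z \<in> W v u"
  using gdist_adj_cases[of u v z] by (auto simp: halfspace_def)

lemma halfspace_endpoints: "adj u v \<Longrightarrow> u \<in> W u v" "adj u v \<Longrightarrow> v \<notin> W u v"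
  using gdist_adj adj_sym by (auto simp: halfspace_def)

text \<open>A vertex z nearer to u than to v but not nearer to x than to y satisfies
  d(z,y) = d(z,u), and then u and y would both be medians of x, v and z.\<close>

lemma square_halfspace_subset:
  assumes sq: "adj u v" "adj v y" "adj y x" "adj x u" "u \<noteq> y" "v \<noteq> x"
  shows "W u v \<subseteq> W x y"
proof
  fix z
  assume "z \<in> W u v"
  then have zu: "d z u < d z v" by (simp add: halfspace_def)
  show "z \<in> W x y"
  proof (rule ccontr)
    assume "z \<notin> W x y"
    then have "\<not> d z x < d z y" by (simp add: halfspace_def)
    then have k: "d z x = d z u + 1" "d z y = d z u" "d z v = d z u + 1"
      using gdist_adj_cases[OF sq(1), of z] gdist_adj_cases[OF adj_sym[OF sq(4)], of z]
        gdist_adj_cases[OF sq(2), of z] gdist_adj_cases[OF sq(3), of z] zu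
      by arith+
    have d1: "d x u = 1" "d u v = 1" "d x y = 1" "d y v = 1"
      using sq gdist_adj adj_sym by auto
    have "d x v \<le> d x u + d u v" by (rule gdist_triangle)
    moreover have "d x v \<noteq> 1"
      using gdist_adj_neq[of x v u] adj_if_gdist_eq_1 d1 gdist_sym[of u x] by auto
    ultimately have dxv: "d x v = 2" using sq(6) d1 by (cases "d x v") auto
    have "d u z = d z u" "d v z = d z v" "d x z = d z x" "d y z = d z y" "d v u = d u v"
      "d v y = d y v"
      by (rule gdist_sym)+
    then have "u \<in> I x v" "u \<in> I v z" "u \<in> I x z" "y \<in> I x v" "y \<in> I v z" "y \<in> I x z"
      unfolding interval_def mem_Collect_eq using k d1 dxv by arith+
    then have "u = y" by (rule median_unique)
    with sq(5) show False by simp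
  qed
qed

lemma square_halfspace_eq:
  assumes "adj u v" "adj v y" "adj y x" "adj x u" "u \<noteq> y" "v \<noteq> x"
  shows "W u v = W x y"
  using square_halfspace_subset[OF assms]
    square_halfspace_subset[OF adj_sym[OF assms(3)] adj_sym[OF assms(2)] adj_sym[OF assms(1)]
      adj_sym[OF assms(4)]] assms(5,6)
  by auto

text \<open>Djokovic-Winkler: an edge ab cut by W(u,v) is reached from uv by a chain of squares,
  obtained by walking u towards a and completing a square at each step.\<close>

lemma cut_edge_square_chain:
  assumes "adj u v" "adj a b" "a \<in> W u v" "b \<notin> W u v"
  shows "W a b = W u v \<and> (sq_opp adj)\<^sup>*\<^sup>* {u, v} {a, b}"
  using assms
proof (induction "d u a" arbitrary: u v)
  case 0
  then have ua: "u = a" by simp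
  have "d b a = 1" using gdist_adj[OF adj_sym[OF 0(3)]] .
  moreover have "d b v \<le> d b u" using 0(5) by (simp add: halfspace_def)
  moreover have "d b u \<noteq> d b v" using gdist_adj_neq[OF 0(2)] .
  ultimately have "d b v = 0" unfolding ua by arith
  then show ?case using ua by simp
next
  case (Suc k)
  have "u \<noteq> a" using Suc(2) by auto
  then obtain u' where u': "adj u u'" "d u' a + 1 = d u a" using geodesic_step by blast
  have s: "d u' a = d a u'" "d u a = d a u" "d u b = d b u" "d v b = d b v" "d v a = d a v"
    "d a b = d b a"
    by (rule gdist_sym)+
  have dau: "d a u = Suc k" "d a u' = k" using u'(2) Suc(2) s by simp_all
  have "d a u < d a v" using Suc(5) by (simp add: halfspace_def)
  then have dav: "d a v = k + 2" using gdist_adj_cases[OF Suc(3), of a] dau by arith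
  have bu: "d b u = d a u + 1 \<or> d a u = d b u + 1"
    using gdist_adj_cases[OF Suc(4), of u] s by simp
  have bv: "d b v = d a v + 1 \<or> d a v = d b v + 1"
    using gdist_adj_cases[OF Suc(4), of v] s by simp
  have "\<not> d b u < d b v" using Suc(6) by (simp add: halfspace_def)
  then have dbu: "d b u = k + 2" "d b v = k + 1"
    using gdist_adj_cases[OF Suc(3), of b] bu bv dau(1) dav by arith+
  have "d b u' \<le> d b a + d a u'" by (rule gdist_triangle)
  then have dbu': "d b u' = k + 1"
    using gdist_adj[OF Suc(4)] gdist_adj_cases[OF u'(1), of b] dbu dau s by arith
  have u'v: "u' \<noteq> v" using dau dav by auto
  obtain w where w: "adj u' w" "adj v w" "d b w + 1 = d b u'"
    using square_completion[OF adj_sym[OF u'(1)] adj_sym[OF Suc(3)] u'v, of b] dbu' dbu by auto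
  have uw: "u \<noteq> w" using w(3) dbu dbu' by auto
  have sq: "sq_opp adj {u, v} {u', w}"
    unfolding sq_opp_def using Suc(3) w(2) adj_sym[OF w(1)] adj_sym[OF u'(1)] uw u'v
    by (intro exI[of _ u] exI[of _ v] exI[of _ u'] exI[of _ w]) simp
  have Weq: "W u v = W u' w"
    using square_halfspace_eq[OF Suc(3) w(2) adj_sym[OF w(1)] adj_sym[OF u'(1)] uw] u'v by auto
  have "W a b = W u' w \<and> (sq_opp adj)\<^sup>*\<^sup>* {u', w} {a, b}"
    using Suc.hyps(1)[of u' w] dau s w(1) Suc(4,5,6) Weq by simp
  then show ?case using Weq sq by (auto intro: converse_rtranclp_into_rtranclp)
qed

lemma halfspace_interval_closed:
  assumes "adj u v" "z1 \<in> W u v" "z2 \<in> W u v" "z \<in> I z1 z2"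
  shows "z \<in> W u v"
  using assms
proof (induction "d z1 z" arbitrary: z1)
  case 0
  then show ?case by simp
next
  case (Suc n)
  note uv = Suc.prems(1) and z1 = Suc.prems(2) and z2 = Suc.prems(3) and z = Suc.prems(4)
  from Suc.hyps(2) have "z1 \<noteq> z" by auto
  then obtain w where w: "adj z1 w" "d w z + 1 = d z1 z" using geodesic_step by blast
  have "d z1 z + d z z2 = d z1 z2" using z by (simp add: interval_def)
  moreover have "d w z2 \<le> d w z + d z z2" "d z1 z2 \<le> d z1 w + d w z2"
    by (rule gdist_triangle)+
  ultimately have geo: "d w z + d z z2 = d w z2" "d z1 z2 = d w z2 + 1"
    using gdist_adj[OF w(1)] w(2) by arith+
  show ?case
  proof (cases "w \<in> W u v")
    case True
    then show ?thesis
      using Suc.hyps(1)[of w] Suc.hyps(2) uv z2 w(2) geo(1) by (simp add: interval_def)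
  next
    case False
    then have "z2 \<in> W z1 w" using cut_edge_square_chain[OF uv w(1) z1] z2 by blast
    then show ?thesis
      using geo gdist_sym[of z2 z1] gdist_sym[of z2 w] by (simp add: halfspace_def)
  qed
qed

lemma halfspace_separates: "x \<noteq> y \<Longrightarrow> \<exists>u v. adj u v \<and> x \<in> W u v \<and> y \<notin> W u v"
proof -
  assume "x \<noteq> y"
  then obtain w where w: "adj x w" "d w y + 1 = d x y" using geodesic_step by blast
  then have "d y w < d y x" using gdist_sym[of w y] gdist_sym[of x y] by simp
  then show ?thesis
    using w gdist_adj[OF w(1)] by (intro exI[of _ x] exI[of _ w]) (auto simp: halfspace_def)
qed

lemma eq_if_same_halfspaces:
  assumes "\<And>u v. adj u v \<Longrightarrow> x \<in> W u v \<longleftrightarrow> y \<in> W u v"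
  shows "x = y"
  using halfspace_separates assms by blast

lemma median_halfspace_majority:
  assumes m: "m \<in> I x y" "m \<in> I y z" "m \<in> I x z" and uv: "adj u v"
  shows "m \<in> W u v \<longleftrightarrow>
    (x \<in> W u v \<and> y \<in> W u v) \<or> (y \<in> W u v \<and> z \<in> W u v) \<or> (x \<in> W u v \<and> z \<in> W u v)"
proof -
  have maj: "m \<in> W p q" if "adj p q"
    "(x \<in> W p q \<and> y \<in> W p q) \<or> (y \<in> W p q \<and> z \<in> W p q) \<or> (x \<in> W p q \<and> z \<in> W p q)"
    for p q
    using that m halfspace_interval_closed by blast
  show ?thesis
    using maj[OF uv] maj[OF adj_sym[OF uv]] halfspace_compl[OF uv] by blast
qed

subsection \<open>Convex sets and gates\<close>

lemma convex_cut_edge: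
  assumes "convex_sub adj Y" "y1 \<in> Y" "y2 \<in> Y" "y1 \<in> S" "y2 \<notin> S"
  shows "\<exists>a\<in>Y. \<exists>b\<in>Y. adj a b \<and> a \<in> S \<and> b \<notin> S"
  using assms
proof (induction "d y1 y2" arbitrary: y1)
  case 0
  then show ?case by auto
next
  case (Suc n)
  note Y = Suc.prems(1) and y1 = Suc.prems(2,4) and y2 = Suc.prems(3,5)
  from Suc.hyps(2) have "y1 \<noteq> y2" by auto
  then obtain w where w: "adj y1 w" "d w y2 + 1 = d y1 y2" using geodesic_step by blast
  then have "w \<in> I y1 y2" using gdist_adj[OF w(1)] by (simp add: interval_def)
  then have "w \<in> Y" using Y y1 y2 unfolding convex_sub_def by blast
  show ?case
  proof (cases "w \<in> S")
    case True
    have "n = d w y2" using Suc.hyps(2) w(2) by simp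
    from Suc.hyps(1)[OF this Y \<open>w \<in> Y\<close> y2(1) True y2(2)] show ?thesis .
  next
    case False
    with w(1) y1 \<open>w \<in> Y\<close> show ?thesis by blast
  qed
qed

text \<open>A nearest point g works: the median of x, g and a lies in A, so it is g.\<close>

lemma exists_gate:
  assumes A: "convex_sub adj A"
  obtains g where "g \<in> A" "\<And>a. a \<in> A \<Longrightarrow> d x a = d x g + d g a"
proof -
  obtain a0 where "a0 \<in> A" using A unfolding convex_sub_def by blast
  then obtain g where g: "g \<in> A" "\<And>y. y \<in> A \<Longrightarrow> d x g \<le> d x y"
    using ex_has_least_nat[of "\<lambda>y. y \<in> A" a0 "d x"] by blast
  have "d x a = d x g + d g a" if a: "a \<in> A" for a
  proof -
    obtain m where m: "m \<in> I x g" "m \<in> I g a" "m \<in> I x a" using median_exists by blast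
    have "m \<in> A" using m(2) A g(1) a unfolding convex_sub_def by blast
    then have "d x g \<le> d x m" by (rule g(2))
    moreover have "d x m + d m g = d x g" using m(1) by (simp add: interval_def)
    ultimately have "d m g = 0" by arith
    then have "m = g" by simp
    then show ?thesis using m(3) by (simp add: interval_def)
  qed
  with g(1) show ?thesis by (rule that)
qed

lemma gate_eqI:
  assumes g: "g \<in> A" and through: "\<And>a. a \<in> A \<Longrightarrow> d x a = d x g + d g a"
  shows "gate adj A x = g"
  unfolding gate_def
proof (rule the_equality)
  have "d x g < d x y" if "y \<in> A" "y \<noteq> g" for y
    using through[OF that(1)] that(2) by (cases "d g y") auto
  with g show "g \<in> A \<and> (\<forall>y\<in>A. y \<noteq> g \<longrightarrow> d x g < d x y)" by blast
next
  fix g' assume g': "g' \<in> A \<and> (\<forall>y\<in>A. y \<noteq> g' \<longrightarrow> d x g' < d x y)"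
  show "g' = g"
  proof (rule ccontr)
    assume "g' \<noteq> g"
    then have "g \<noteq> g'" by simp
    with g g' have "d x g' < d x g" by blast
    moreover have "d x g' = d x g + d g g'" using through g' by blast
    ultimately show False by arith
  qed
qed

lemma
  assumes "convex_sub adj A"
  shows gate_in: "gate adj A x \<in> A"
    and gate_in_interval: "a \<in> A \<Longrightarrow> gate adj A x \<in> I x a"
proof -
  obtain g where g: "g \<in> A" and through: "\<And>a. a \<in> A \<Longrightarrow> d x a = d x g + d g a"
    using exists_gate[OF assms] by blast
  then have gate: "gate adj A x = g" by (rule gate_eqI)
  with g show "gate adj A x \<in> A" by simp
  show "gate adj A x \<in> I x a" if "a \<in> A"
    using through[OF that] gate by (simp add: interval_def)
qed

lemma gate_halfspace_iff:
  assumes A: "convex_sub adj A" and uv: "adj u v" and "cuts adj u v A"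
  shows "gate adj A x \<in> W u v \<longleftrightarrow> x \<in> W u v"
proof -
  obtain a1 a2 where a: "a1 \<in> A" "a1 \<in> W u v" "a2 \<in> A" "a2 \<in> W v u"
    using assms(3) halfspace_compl[OF uv] unfolding cuts_def by blast
  show ?thesis
    using halfspace_interval_closed[OF uv _ a(2) gate_in_interval[OF A a(1)]]
      halfspace_interval_closed[OF adj_sym[OF uv] _ a(4) gate_in_interval[OF A a(3)]]
      halfspace_compl[OF uv]
    by blast
qed

lemma gate_median_same_side:
  assumes A: "convex_sub adj A" and uv: "adj u v" and "z \<in> A"
    and z: "z \<in> I (gate adj A b1) (gate adj A b2)"
    and m: "m \<in> I b1 b2" "m \<in> I b2 z" "m \<in> I b1 z"
  shows "gate adj A m \<in> W u v \<longleftrightarrow> z \<in> W u v"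
proof (cases "cuts adj u v A")
  case True
  note gate_side = gate_halfspace_iff[OF A uv True]
  have "b1 \<in> W u v \<Longrightarrow> b2 \<in> W u v \<Longrightarrow> z \<in> W u v"
    using halfspace_interval_closed[OF uv _ _ z] gate_side by blast
  moreover have "b1 \<in> W v u \<Longrightarrow> b2 \<in> W v u \<Longrightarrow> z \<in> W v u"
    using halfspace_interval_closed[OF adj_sym[OF uv] _ _ z] gate_side halfspace_compl[OF uv]
    by blast
  ultimately show ?thesis
    using gate_side median_halfspace_majority[OF m uv] halfspace_compl[OF uv] by blast
next
  case False
  then show ?thesis using \<open>z \<in> A\<close> gate_in[OF A] unfolding cuts_def by blast
qed

text \<open>A point z between the gates of b1 and b2 is the gate of the median of b1, b2 and z.\<close>

lemma convex_gate_image: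
  assumes A: "convex_sub adj A" and B: "convex_sub adj B"
  shows "convex_sub adj (gate adj A ` B)"
  unfolding convex_sub_def
proof (intro conjI ballI subsetI)
  show "gate adj A ` B \<noteq> {}" using B unfolding convex_sub_def by blast
next
  fix p q z
  assume "p \<in> gate adj A ` B" "q \<in> gate adj A ` B" and z: "z \<in> I p q"
  then obtain b1 b2 where b: "b1 \<in> B" "b2 \<in> B" "p = gate adj A b1" "q = gate adj A b2"
    by blast
  obtain m where m: "m \<in> I b1 b2" "m \<in> I b2 z" "m \<in> I b1 z" using median_exists by blast
  have "m \<in> B" using m(1) b B unfolding convex_sub_def by blast
  have "z \<in> A" using z b gate_in[OF A] A unfolding convex_sub_def by blast
  then have "gate adj A m = z"
    using gate_median_same_side[OF A _ _ _ m] z b by (blast intro: eq_if_same_halfspaces)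
  with \<open>m \<in> B\<close> show "z \<in> gate adj A ` B" by blast
qed

lemma cuts_gate_image_iff:
  assumes A: "convex_sub adj A" and uv: "adj u v"
  shows "cuts adj u v (gate adj A ` B) \<longleftrightarrow> cuts adj u v A \<and> cuts adj u v B"
proof
  assume cut: "cuts adj u v (gate adj A ` B)"
  then have "cuts adj u v A" using gate_in[OF A] unfolding cuts_def by blast
  with cut show "cuts adj u v A \<and> cuts adj u v B"
    using gate_halfspace_iff[OF A uv] unfolding cuts_def by blast
next
  assume "cuts adj u v A \<and> cuts adj u v B"
  then show "cuts adj u v (gate adj A ` B)"
    using gate_halfspace_iff[OF A uv] unfolding cuts_def by blast
qed

subsection \<open>Hyperplanes\<close>

lemma square_chain_cut_edge:
  assumes "(sq_opp adj)\<^sup>*\<^sup>* {u, v} f" "adj u v"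
  shows "\<exists>a b. f = {a, b} \<and> adj a b \<and> a \<in> W u v \<and> b \<notin> W u v"
  using assms
proof (induction rule: rtranclp_induct)
  case base
  then show ?case using halfspace_endpoints by blast
next
  case (step f g)
  then obtain a b where ab: "f = {a, b}" "adj a b" "a \<in> W u v" "b \<notin> W u v" by blast
  have Wab: "W a b = W u v" using cut_edge_square_chain[OF step(4) ab(2,3,4)] by blast
  obtain p q x y where s: "f = {p, q}" "g = {x, y}" "adj p q" "adj q y" "adj y x" "adj x p"
    "p \<noteq> y" "q \<noteq> x"
    using step(2) unfolding sq_opp_def by blast
  from ab(1) s(1) have "(a = p \<and> b = q) \<or> (a = q \<and> b = p)" by (auto simp: doubleton_eq_iff)
  then show ?case
  proof
    assume "a = p \<and> b = q"
    then have "W x y = W u v" using square_halfspace_eq[OF s(3-8)] Wab by simp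
    then show ?thesis using s(2) adj_sym[OF s(5)] halfspace_endpoints[OF adj_sym[OF s(5)]] by auto
  next
    assume "a = q \<and> b = p"
    then have "W y x = W u v"
      using square_halfspace_eq[OF adj_sym[OF s(3)] adj_sym[OF s(6)] adj_sym[OF s(5)]
          adj_sym[OF s(4)]] s(7,8) Wab
      by simp
    then show ?thesis using s(2) s(5) halfspace_endpoints[OF s(5)] by (auto simp: insert_commute)
  qed
qed

lemma hyperplane_crosses_iff_cuts:
  assumes "H \<in> hyperplanes adj"
  obtains u v where "adj u v" "\<And>Y. convex_sub adj Y \<Longrightarrow> crosses H Y \<longleftrightarrow> cuts adj u v Y"
proof -
  obtain e where H: "H = {f. (sq_opp adj)\<^sup>*\<^sup>* e f}" and "is_edge adj e"
    using assms unfolding hyperplanes_def by blast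
  then obtain u v where uv: "adj u v" and e: "e = {u, v}"
    unfolding is_edge_def by blast
  have "crosses H Y \<longleftrightarrow> cuts adj u v Y" if Y: "convex_sub adj Y" for Y
  proof
    assume "crosses H Y"
    then obtain f where "(sq_opp adj)\<^sup>*\<^sup>* {u, v} f" "f \<subseteq> Y"
      unfolding crosses_def H e by blast
    moreover from this(1) obtain a b where "f = {a, b}" "a \<in> W u v" "b \<notin> W u v"
      using square_chain_cut_edge[OF _ uv] by blast
    ultimately show "cuts adj u v Y" unfolding cuts_def by blast
  next
    assume "cuts adj u v Y"
    then obtain y1 y2 where "y1 \<in> Y" "y2 \<in> Y" "y1 \<in> W u v" "y2 \<notin> W u v"
      unfolding cuts_def by blast
    then obtain a b where ab: "a \<in> Y" "b \<in> Y" "adj a b" "a \<in> W u v" "b \<notin> W u v"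
      using convex_cut_edge[OF Y] by blast
    then have "{a, b} \<in> H"
      using cut_edge_square_chain[OF uv ab(3-5)] unfolding H e by simp
    moreover have "{a, b} \<subseteq> Y" using ab(1,2) by simp
    ultimately show "crosses H Y" unfolding crosses_def by (rule bexI[rotated])
  qed
  with uv show ?thesis by (rule that)
qed

end

theorem mainTheorem17:
  fixes adj :: "'a \<Rightarrow> 'a \<Rightarrow> bool" and C D E :: "'a set"
  assumes "median_graph adj"
    and "convex_sub adj C" and "convex_sub adj D" and "convex_sub adj E"
  shows "parallel adj (gate adj (gate adj C ` D) ` E) (gate adj C ` (gate adj D ` E))
       \<and> parallel adj (gate adj (gate adj C ` D) ` E) (gate adj C ` (gate adj E ` D))
       \<and> parallel adj (gate adj C ` (gate adj D ` E)) (gate adj C ` (gate adj E ` D))"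
proof -
  interpret median adj by (rule median.intro) (rule assms(1))
  note C = assms(2) and D = assms(3) and E = assms(4)
  have CD: "convex_sub adj (gate adj C ` D)" and DE: "convex_sub adj (gate adj D ` E)"
    and ED: "convex_sub adj (gate adj E ` D)"
    using convex_gate_image C D E by blast+
  have "crosses H Y \<longleftrightarrow> crosses H C \<and> crosses H D \<and> crosses H E"
    if H: "H \<in> hyperplanes adj"
      and "Y \<in> {gate adj (gate adj C ` D) ` E, gate adj C ` (gate adj D ` E),
                gate adj C ` (gate adj E ` D)}"
    for H Y
  proof -
    obtain u v where uv: "adj u v"
      and crosses: "\<And>Y. convex_sub adj Y \<Longrightarrow> crosses H Y \<longleftrightarrow> cuts adj u v Y"
      using hyperplane_crosses_iff_cuts[OF H] by blast
    show ?thesis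
      using that(2) C D E CD DE ED convex_gate_image[OF CD E] convex_gate_image[OF C DE]
        convex_gate_image[OF C ED]
      by (auto simp: crosses cuts_gate_image_iff[OF _ uv])
  qed
  then show ?thesis unfolding parallel_def by blast
qed

end
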